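(* In the nonatomic base station association game with cost densities $c_{lj}(\mathbf{m})=g_{lj}c(m_j)$, suppose $h_{lj}=h$ for all $l\in\mathcal{L}$, $j\in\mathcal{N}$ (for a constant $h>0$). Then every Nash equilibrium is system optimal, i.e., minimizes $C(\mathbf{m})=\sum_{j\in\mathcal{N}}\sum_{l=1}^L m_{lj}g_{lj}c(m_j)$ over all congestion profiles.
   Context: Nonatomic model: classes $\mathcal{L}=\{1,\dots,L\}$ of nonatomic mobiles, class $l$ having total mass $M_l>0$, target SINR density $\gamma_l>0$ and power gain $h_{lj}>0$ to BS $j\in\mathcal{N}=\{1,\dots,N\}$; noise power $\sigma^2>0$. A congestion profile is $\mathbf{m}=(m_{lj})$ with $m_{lj}\ge0$, $\sum_j m_{lj}=M_l$. Set $m_j=\sum_l\gamma_l m_{lj}$, $g_{lj}=\gamma_l\sigma^2/h_{lj}$, and $c(z)=1/(1-z)$ for $z<1$, $c(z)=\infty$ for $z\ge1$; $c_{lj}(\mathbf{m})=g_{lj}c(m_j)$. $\mathbf{m}$ is a Nash equilibrium if for all $l,j$, $m_{lj}>0$ implies $c_{lj}(\mathbf{m})\le c_{lk}(\mathbf{m})$ for all $k$. Standing feasibility assumption: $\sum_l\gamma_l M_l<N$. *)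

theory Defs
  imports "HOL-Library.Extended_Real"
begin

text \<open>Classes are indexed by {1..L}, base stations by {1..N}.
  A congestion profile is m :: nat => nat => real, m l j = mass of class l at BS j.\<close>

definition profile :: "nat \<Rightarrow> nat \<Rightarrow> (nat \<Rightarrow> real) \<Rightarrow> (nat \<Rightarrow> nat \<Rightarrow> real) \<Rightarrow> bool" where
  "profile L N M m \<longleftrightarrow>
     (\<forall>l\<in>{1..L}. \<forall>j\<in>{1..N}. 0 \<le> m l j) \<and> (\<forall>l\<in>{1..L}. (\<Sum>j\<in>{1..N}. m l j) = M l)"

definition load :: "nat \<Rightarrow> (nat \<Rightarrow> real) \<Rightarrow> (nat \<Rightarrow> nat \<Rightarrow> real) \<Rightarrow> nat \<Rightarrow> real" where
  "load L gamma m j = (\<Sum>l\<in>{1..L}. gamma l * m l j)"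

definition cfun :: "real \<Rightarrow> ereal" where
  "cfun z = (if z < 1 then ereal (1 / (1 - z)) else \<infinity>)"

definition gcoef :: "(nat \<Rightarrow> real) \<Rightarrow> real \<Rightarrow> (nat \<Rightarrow> nat \<Rightarrow> real) \<Rightarrow> nat \<Rightarrow> nat \<Rightarrow> real" where
  "gcoef gamma sigma2 h l j = gamma l * sigma2 / h l j"

definition cost_density ::
  "nat \<Rightarrow> (nat \<Rightarrow> real) \<Rightarrow> real \<Rightarrow> (nat \<Rightarrow> nat \<Rightarrow> real) \<Rightarrow> (nat \<Rightarrow> nat \<Rightarrow> real) \<Rightarrow> nat \<Rightarrow> nat \<Rightarrow> ereal" where
  "cost_density L gamma sigma2 h m l j = ereal (gcoef gamma sigma2 h l j) * cfun (load L gamma m j)"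

definition nash_eq ::
  "nat \<Rightarrow> nat \<Rightarrow> (nat \<Rightarrow> real) \<Rightarrow> (nat \<Rightarrow> real) \<Rightarrow> real \<Rightarrow> (nat \<Rightarrow> nat \<Rightarrow> real) \<Rightarrow> (nat \<Rightarrow> nat \<Rightarrow> real) \<Rightarrow> bool" where
  "nash_eq L N M gamma sigma2 h m \<longleftrightarrow> profile L N M m \<and>
     (\<forall>l\<in>{1..L}. \<forall>j\<in>{1..N}. m l j > 0 \<longrightarrow>
        (\<forall>k\<in>{1..N}. cost_density L gamma sigma2 h m l j \<le> cost_density L gamma sigma2 h m l k))"

text \<open>C(m) = sum_j sum_l m_lj g_lj c(m_j)  (in ereal; 0 * infinity = 0)\<close>
definition total_cost ::
  "nat \<Rightarrow> nat \<Rightarrow> (nat \<Rightarrow> real) \<Rightarrow> real \<Rightarrow> (nat \<Rightarrow> nat \<Rightarrow> real) \<Rightarrow> (nat \<Rightarrow> nat \<Rightarrow> real) \<Rightarrow> ereal" where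
  "total_cost L N gamma sigma2 h m =
     (\<Sum>j\<in>{1..N}. \<Sum>l\<in>{1..L}. ereal (m l j) * cost_density L gamma sigma2 h m l j)"

end

theory Submission
  imports Defs
begin

text \<open>With a common power gain the cost densities are \<open>\<gamma>\<^sub>l (\<sigma>\<^sup>2/h) c(m\<^sub>j)\<close>, so a class
  prefers a base station exactly when its load is smaller.  Hence in a Nash equilibrium every
  loaded base station carries the minimal load, i.e. all loads are equal to some \<open>\<mu>\<close>, and
  feasibility forces \<open>\<mu> < 1\<close>.  The total cost is \<open>(\<sigma>\<^sup>2/h) \<Sum>\<^sub>j m\<^sub>j/(1 - m\<^sub>j)\<close>, a convex function
  of the loads whose sum \<open>\<Sum>\<^sub>l \<gamma>\<^sub>l M\<^sub>l\<close> is the same for every profile; the tangent line of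
  \<open>z/(1 - z)\<close> at \<open>\<mu>\<close> shows that equal loads minimise it.\<close>

lemma sum_load_eq:
  assumes "profile L N M m"
  shows "(\<Sum>j\<in>{1..N}. load L gamma m j) = (\<Sum>l\<in>{1..L}. gamma l * M l)"
proof -
  have "(\<Sum>j\<in>{1..N}. load L gamma m j) = (\<Sum>l\<in>{1..L}. gamma l * (\<Sum>j\<in>{1..N}. m l j))"
    unfolding load_def by (subst sum.swap) (simp add: sum_distrib_left)
  also have "\<dots> = (\<Sum>l\<in>{1..L}. gamma l * M l)"
    using assms unfolding profile_def by simp
  finally show ?thesis .
qed

lemma load_nonneg:
  assumes "profile L N M m" "\<forall>l\<in>{1..L}. gamma l \<ge> 0" "j \<in> {1..N}"
  shows "0 \<le> load L gamma m j"
proof -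
  have "0 \<le> gamma l * m l j" if "l \<in> {1..L}" for l
    using assms that unfolding profile_def by simp
  then show ?thesis unfolding load_def by (rule sum_nonneg)
qed

lemma load_pos_imp_ex_mass:
  assumes "\<forall>l\<in>{1..L}. gamma l \<ge> 0" "load L gamma m j > 0"
  obtains l where "l \<in> {1..L}" "m l j > 0"
proof -
  have "\<exists>l\<in>{1..L}. m l j > 0"
  proof (rule ccontr)
    assume "\<not> ?thesis"
    then have "gamma l * m l j \<le> 0" if "l \<in> {1..L}" for l
      using assms(1) that by (simp add: mult_nonneg_nonpos not_less)
    then have "load L gamma m j \<le> 0" unfolding load_def by (rule sum_nonpos)
    with assms(2) show False by simp
  qed
  with that show thesis by blast
qed

lemma cost_density_const_gain:
  assumes "\<forall>l\<in>{1..L}. \<forall>j\<in>{1..N}. h l j = h0" "l \<in> {1..L}" "j \<in> {1..N}"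
  shows "cost_density L gamma sigma2 h m l j = ereal (gamma l * sigma2 / h0) * cfun (load L gamma m j)"
  using assms unfolding cost_density_def gcoef_def by simp

lemma cfun_below_one: "z < 1 \<Longrightarrow> cfun z = ereal (1 / (1 - z))"
  unfolding cfun_def by simp

lemma ereal_mult_cfun_overload: "c > 0 \<Longrightarrow> z \<ge> 1 \<Longrightarrow> ereal c * cfun z = \<infinity>"
  unfolding cfun_def by simp

lemma total_cost_const_gain:
  assumes h_const: "\<forall>l\<in>{1..L}. \<forall>j\<in>{1..N}. h l j = h0"
    and below: "\<forall>j\<in>{1..N}. load L gamma m j < 1"
  shows "total_cost L N gamma sigma2 h m =
    ereal (sigma2 / h0 * (\<Sum>j\<in>{1..N}. load L gamma m j / (1 - load L gamma m j)))"
proof -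
  have column: "(\<Sum>l\<in>{1..L}. ereal (m l j) * cost_density L gamma sigma2 h m l j)
      = ereal (sigma2 / h0 * (load L gamma m j / (1 - load L gamma m j)))"
    if j: "j \<in> {1..N}" for j
  proof -
    let ?x = "load L gamma m j"
    have "(\<Sum>l\<in>{1..L}. ereal (m l j) * cost_density L gamma sigma2 h m l j)
       = (\<Sum>l\<in>{1..L}. ereal (gamma l * m l j * (sigma2 / h0 / (1 - ?x))))"
      using j below by (intro sum.cong refl)
        (simp add: cost_density_const_gain[OF h_const] cfun_below_one)
    also have "\<dots> = ereal (?x * (sigma2 / h0 / (1 - ?x)))"
      unfolding load_def by (simp only: sum_distrib_right sum_ereal)
    finally show ?thesis by simp
  qed
  have "total_cost L N gamma sigma2 h m =
      (\<Sum>j\<in>{1..N}. ereal (sigma2 / h0 * (load L gamma m j / (1 - load L gamma m j))))"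
    unfolding total_cost_def by (rule sum.cong[OF refl column])
  then show ?thesis by (simp add: sum_distrib_left)
qed

lemma total_cost_overload:
  assumes gamma_pos: "\<forall>l\<in>{1..L}. gamma l > 0"
    and sigma_pos: "sigma2 > 0" and h0_pos: "h0 > 0"
    and h_const: "\<forall>l\<in>{1..L}. \<forall>j\<in>{1..N}. h l j = h0"
    and j: "j \<in> {1..N}" and overload: "load L gamma m j \<ge> 1"
  shows "total_cost L N gamma sigma2 h m = \<infinity>"
proof -
  have "\<forall>l\<in>{1..L}. gamma l \<ge> 0" "load L gamma m j > 0"
    using gamma_pos overload by (auto simp: less_imp_le)
  then obtain l where l: "l \<in> {1..L}" "m l j > 0"
    by (rule load_pos_imp_ex_mass)
  have "ereal (m l j) * cost_density L gamma sigma2 h m l j = \<infinity>"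
    using l j gamma_pos sigma_pos h0_pos overload
    by (simp add: cost_density_const_gain[OF h_const] ereal_mult_cfun_overload)
  then have "(\<Sum>l\<in>{1..L}. ereal (m l j) * cost_density L gamma sigma2 h m l j) = \<infinity>"
    using l by (auto simp: sum_Pinfty)
  then show ?thesis
    unfolding total_cost_def using j by (auto simp: sum_Pinfty)
qed

lemma frac_one_minus_tangent_le:
  fixes z mu :: real
  assumes "z < 1" "mu < 1"
  shows "mu / (1 - mu) + (z - mu) / (1 - mu)\<^sup>2 \<le> z / (1 - z)"
proof -
  define u v where "u = 1 - z" and "v = 1 - mu"
  have u: "u > 0" and v: "v > 0" using assms by (auto simp: u_def v_def)
  have "(2 * v - u) * u \<le> v\<^sup>2"
    using zero_le_power2[of "v - u"] by (simp add: power2_eq_square algebra_simps)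
  then have "(2 * v - u) / v\<^sup>2 \<le> 1 / u"
    using u v by (simp add: field_simps)
  moreover have "mu / (1 - mu) + (z - mu) / (1 - mu)\<^sup>2 = (1 - v) / v + (v - u) / v\<^sup>2"
    by (simp add: u_def v_def)
  moreover have "(1 - v) / v + (v - u) / v\<^sup>2 = (2 * v - u) / v\<^sup>2 - 1"
    using v by (simp add: field_simps power2_eq_square)
  moreover have "z / (1 - z) = 1 / u - 1"
    using u by (simp add: u_def field_simps)
  ultimately show ?thesis by linarith
qed

lemma sum_frac_one_minus_ge_balanced:
  fixes x :: "'a \<Rightarrow> real"
  assumes "\<forall>j\<in>A. x j < 1" "mu < 1" "(\<Sum>j\<in>A. x j) = real (card A) * mu"
  shows "real (card A) * (mu / (1 - mu)) \<le> (\<Sum>j\<in>A. x j / (1 - x j))"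
proof -
  have "(\<Sum>j\<in>A. mu / (1 - mu) + (x j - mu) / (1 - mu)\<^sup>2)
      = real (card A) * (mu / (1 - mu)) + ((\<Sum>j\<in>A. x j) - real (card A) * mu) / (1 - mu)\<^sup>2"
    by (simp add: sum.distrib sum_divide_distrib[symmetric] sum_subtractf)
  also have "\<dots> = real (card A) * (mu / (1 - mu))"
    using assms(3) by simp
  finally show ?thesis
    using sum_mono[of A "\<lambda>j. mu / (1 - mu) + (x j - mu) / (1 - mu)\<^sup>2" "\<lambda>j. x j / (1 - x j)"]
      assms(1,2) frac_one_minus_tangent_le by auto
qed

lemma nash_eq_load_le:
  assumes NE: "nash_eq L N M gamma sigma2 h m"
    and gamma_pos: "\<forall>l\<in>{1..L}. gamma l > 0"
    and sigma_pos: "sigma2 > 0" and h0_pos: "h0 > 0"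
    and h_const: "\<forall>l\<in>{1..L}. \<forall>j\<in>{1..N}. h l j = h0"
    and j: "j \<in> {1..N}" and k: "k \<in> {1..N}" and below: "load L gamma m k < 1"
  shows "load L gamma m j \<le> load L gamma m k"
proof (rule ccontr)
  let ?x = "load L gamma m j" and ?y = "load L gamma m k"
  assume "\<not> ?x \<le> ?y"
  then have less: "?y < ?x" by simp
  have gamma_nonneg: "\<forall>l\<in>{1..L}. gamma l \<ge> 0"
    using gamma_pos by (simp add: less_imp_le)
  have "0 \<le> ?y"
    using NE k load_nonneg[OF _ gamma_nonneg] unfolding nash_eq_def by blast
  with less have "?x > 0" by simp
  with gamma_nonneg obtain l where l: "l \<in> {1..L}" "m l j > 0"
    by (rule load_pos_imp_ex_mass)
  define g where "g = gamma l * sigma2 / h0"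
  have g: "g > 0" using gamma_pos l sigma_pos h0_pos by (simp add: g_def)
  have "cost_density L gamma sigma2 h m l j \<le> cost_density L gamma sigma2 h m l k"
    using NE l j k unfolding nash_eq_def by blast
  then have prefer_j: "ereal g * cfun ?x \<le> ereal (g / (1 - ?y))"
    using l j k below by (simp add: cost_density_const_gain[OF h_const] cfun_below_one g_def)
  show False
  proof (cases "?x < 1")
    case True
    then have "g / (1 - ?x) \<le> g / (1 - ?y)"
      using prefer_j by (simp add: cfun_below_one)
    moreover have "g / (1 - ?y) < g / (1 - ?x)"
      using g True less below by (intro divide_strict_left_mono) auto
    ultimately show False by simp
  next
    case False
    then show False
      using prefer_j g by (simp add: ereal_mult_cfun_overload)
  qed
qed

lemma nash_eq_balanced_load:
  assumes NE: "nash_eq L N M gamma sigma2 h m"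
    and gamma_pos: "\<forall>l\<in>{1..L}. gamma l > 0"
    and sigma_pos: "sigma2 > 0" and h0_pos: "h0 > 0"
    and h_const: "\<forall>l\<in>{1..L}. \<forall>j\<in>{1..N}. h l j = h0"
    and feasible: "(\<Sum>l\<in>{1..L}. gamma l * M l) < real N"
  obtains mu where "mu < 1" "\<forall>j\<in>{1..N}. load L gamma m j = mu"
proof -
  let ?ld = "load L gamma m"
  have prof: "profile L N M m" using NE unfolding nash_eq_def by simp
  have "N \<noteq> 0" using feasible sum_load_eq[OF prof] by (intro notI) simp
  then have ne: "?ld ` {1..N} \<noteq> {}" by simp
  define mu where "mu = Min (?ld ` {1..N})"
  obtain k where k: "k \<in> {1..N}" "?ld k = mu"
    using Min_in[OF _ ne] unfolding mu_def by auto
  have mu_le: "mu \<le> ?ld j" if "j \<in> {1..N}" for j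
    unfolding mu_def using that by simp
  have "mu < 1"
  proof (rule ccontr)
    assume "\<not> mu < 1"
    then have "real N \<le> (\<Sum>j\<in>{1..N}. ?ld j)"
      using sum_mono[of "{1..N}" "\<lambda>_. 1" ?ld] mu_le by force
    then show False using sum_load_eq[OF prof] feasible by simp
  qed
  moreover have "\<forall>j\<in>{1..N}. ?ld j = mu"
  proof
    fix j assume j: "j \<in> {1..N}"
    have "?ld j \<le> mu"
      using nash_eq_load_le[OF NE gamma_pos sigma_pos h0_pos h_const j k(1)] k \<open>mu < 1\<close> by simp
    with mu_le[OF j] show "?ld j = mu" by simp
  qed
  ultimately show thesis by (rule that)
qed

theorem proposition11:
  fixes L N :: nat and M gamma :: "nat \<Rightarrow> real" and sigma2 h0 :: real
    and h m :: "nat \<Rightarrow> nat \<Rightarrow> real"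
  assumes M_pos: "\<forall>l\<in>{1..L}. M l > 0"
    and gamma_pos: "\<forall>l\<in>{1..L}. gamma l > 0"
    and sigma_pos: "sigma2 > 0"
    and h0_pos: "h0 > 0"
    and h_const: "\<forall>l\<in>{1..L}. \<forall>j\<in>{1..N}. h l j = h0"
    and feasible: "(\<Sum>l\<in>{1..L}. gamma l * M l) < real N"
    and NE: "nash_eq L N M gamma sigma2 h m"
  shows "\<forall>m'. profile L N M m' \<longrightarrow>
           total_cost L N gamma sigma2 h m \<le> total_cost L N gamma sigma2 h m'"
proof (intro allI impI)
  fix m' assume prof': "profile L N M m'"
  have prof: "profile L N M m" using NE unfolding nash_eq_def by simp
  obtain mu where mu: "mu < 1" and balanced: "\<forall>j\<in>{1..N}. load L gamma m j = mu"
    using nash_eq_balanced_load[OF NE gamma_pos sigma_pos h0_pos h_const feasible] .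
  have cost: "total_cost L N gamma sigma2 h m = ereal (sigma2 / h0 * (real N * (mu / (1 - mu))))"
    using total_cost_const_gain[OF h_const] balanced mu by simp
  show "total_cost L N gamma sigma2 h m \<le> total_cost L N gamma sigma2 h m'"
  proof (cases "\<forall>j\<in>{1..N}. load L gamma m' j < 1")
    case True
    have "(\<Sum>j\<in>{1..N}. load L gamma m' j) = (\<Sum>j\<in>{1..N}. load L gamma m j)"
      using sum_load_eq[OF prof'] sum_load_eq[OF prof] by simp
    also have "\<dots> = real (card {1..N}) * mu"
      using balanced by simp
    finally have "(\<Sum>j\<in>{1..N}. load L gamma m' j) = real (card {1..N}) * mu" .
    then have "real N * (mu / (1 - mu)) \<le> (\<Sum>j\<in>{1..N}. load L gamma m' j / (1 - load L gamma m' j))"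
      using sum_frac_one_minus_ge_balanced[of "{1..N}"] True mu by simp
    then have "sigma2 / h0 * (real N * (mu / (1 - mu)))
        \<le> sigma2 / h0 * (\<Sum>j\<in>{1..N}. load L gamma m' j / (1 - load L gamma m' j))"
      using sigma_pos h0_pos by (intro mult_left_mono) auto
    then show ?thesis
      using cost total_cost_const_gain[OF h_const True] by simp
  next
    case False
    then show ?thesis
      using total_cost_overload[OF gamma_pos sigma_pos h0_pos h_const] by (auto simp: not_less)
  qed
qed

end
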